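(* For all $j\in\mathbb{Z}_n$ the element $c_j:=b_kb_{j-k}+b_{j-k}b_k$ is independent of $k\in\mathbb{Z}_n$ and central in $A$. Moreover, for each $r\geq 0$, the set $$\mathcal{B}_r=\{\,b_0^{i_0}b_1^{i_1}\cdots b_{n-1}^{i_{n-1}}\,c_0^{j_0}c_1^{j_1}\cdots c_{n-1}^{j_{n-1}}\ \mid\ (i_0,\dots,i_{n-1})\in\{0,1\}^n,\ (j_0,\dots,j_{n-1})\in\mathbb{N}^n,\ \textstyle\sum_s i_s+2\sum_s j_s=r\,\}$$ is a $\Bbbk$-linear basis of the degree-$r$ component $A_r$ of $A$.
   Context: $\Bbbk$ is an algebraically closed field of characteristic zero, $n\ge 2$, $A=\Bbbk_{-1}[x_0,\dots,x_{n-1}]$ is generated by degree-one $x_0,\dots,x_{n-1}$ with $x_ix_j=-x_jx_i$ ($i\ne j$). Let $\omega$ be a primitive $n$th root of unity and $b_\gamma=\frac1n\sum_{i=0}^{n-1}\omega^{i\gamma}x_i$ for $\gamma\in\mathbb{Z}_n$ (indices modulo $n$). *)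

theory Defs
  imports "HOL-Computational_Algebra.Polynomial"
begin

text \<open>The skew polynomial ring A = k_{-1}[x_0,...,x_{n-1}] is modelled by its
monomial basis: an element is a finitely supported coefficient function on
exponent vectors a :: nat \<Rightarrow> nat (with a i = 0 for i \<ge> n), where the
monomial a stands for x_0^{a 0} ... x_{n-1}^{a (n-1)}.  The product is the
(-1)-twisted convolution: x^a x^b = (-1)^(sum_{i>j} a_i b_j) x^(a+b),
which is exactly what the relations x_i x_j = - x_j x_i (i \<noteq> j) give.\<close>

type_synonym 'k skel = "(nat \<Rightarrow> nat) \<Rightarrow> 'k"

definition skA :: "nat \<Rightarrow> 'k::field skel set" where
  "skA n = {f. finite {a. f a \<noteq> 0} \<and> (\<forall>a. f a \<noteq> 0 \<longrightarrow> (\<forall>i\<ge>n. a i = 0))}"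

definition skA_deg :: "nat \<Rightarrow> nat \<Rightarrow> 'k::field skel set" where
  "skA_deg n r = {f \<in> skA n. \<forall>a. f a \<noteq> 0 \<longrightarrow> (\<Sum>i<n. a i) = r}"

definition sk_sign :: "nat \<Rightarrow> (nat \<Rightarrow> nat) \<Rightarrow> (nat \<Rightarrow> nat) \<Rightarrow> 'k::field" where
  "sk_sign n a b = (-1) ^ (\<Sum>i<n. \<Sum>j<i. a i * b j)"

definition sk_mul :: "nat \<Rightarrow> 'k::field skel \<Rightarrow> 'k skel \<Rightarrow> 'k skel" where
  "sk_mul n f g = (\<lambda>c. \<Sum>a\<in>{a. \<forall>i. a i \<le> c i}.
       sk_sign n a (\<lambda>i. c i - a i) * f a * g (\<lambda>i. c i - a i))"

definition sk_add :: "'k::field skel \<Rightarrow> 'k skel \<Rightarrow> 'k skel" where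
  "sk_add f g = (\<lambda>a. f a + g a)"

definition sk_zero :: "'k::field skel" where
  "sk_zero = (\<lambda>a. 0)"

definition sk_one :: "'k::field skel" where
  "sk_one = (\<lambda>a. if a = (\<lambda>_. 0) then 1 else 0)"

definition sk_x :: "nat \<Rightarrow> 'k::field skel" where
  "sk_x i = (\<lambda>a. if a = (\<lambda>j. if j = i then 1 else 0) then 1 else 0)"

definition sk_pow :: "nat \<Rightarrow> 'k::field skel \<Rightarrow> nat \<Rightarrow> 'k skel" where
  "sk_pow n f k = (sk_mul n f ^^ k) sk_one"

definition sk_prod :: "nat \<Rightarrow> 'k::field skel list \<Rightarrow> 'k skel" where
  "sk_prod n fs = foldr (sk_mul n) fs sk_one"

definition sk_b :: "nat \<Rightarrow> 'k::field \<Rightarrow> nat \<Rightarrow> 'k skel" where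
  "sk_b n \<omega> \<gamma> = (\<lambda>a. (1 / of_nat n) * (\<Sum>i<n. \<omega> ^ (i * \<gamma>) * sk_x i a))"

text \<open>c_j computed with the auxiliary index k: b_k b_{j-k} + b_{j-k} b_k
(indices mod n; for j, k < n, j - k mod n is (j + n - k) mod n).\<close>
definition sk_c :: "nat \<Rightarrow> 'k::field \<Rightarrow> nat \<Rightarrow> nat \<Rightarrow> 'k skel" where
  "sk_c n \<omega> j k = sk_add (sk_mul n (sk_b n \<omega> k) (sk_b n \<omega> ((j + n - k) mod n)))
                          (sk_mul n (sk_b n \<omega> ((j + n - k) mod n)) (sk_b n \<omega> k))"

definition sk_idx :: "nat \<Rightarrow> nat \<Rightarrow> ((nat \<Rightarrow> nat) \<times> (nat \<Rightarrow> nat)) set" where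
  "sk_idx n r = {(iv, jv). (\<forall>s. iv s \<le> 1) \<and> (\<forall>s\<ge>n. iv s = 0) \<and> (\<forall>s\<ge>n. jv s = 0)
                  \<and> (\<Sum>s<n. iv s) + 2 * (\<Sum>s<n. jv s) = r}"

definition sk_bas :: "nat \<Rightarrow> 'k::field \<Rightarrow> (nat \<Rightarrow> nat) \<times> (nat \<Rightarrow> nat) \<Rightarrow> 'k skel" where
  "sk_bas n \<omega> p = sk_prod n
     (map (\<lambda>\<gamma>. sk_pow n (sk_b n \<omega> \<gamma>) (fst p \<gamma>)) [0..<n]
      @ map (\<lambda>\<gamma>. sk_pow n (sk_c n \<omega> \<gamma> 0) (snd p \<gamma>)) [0..<n])"

definition sk_lincomb :: "'i set \<Rightarrow> ('i \<Rightarrow> 'k::field) \<Rightarrow> ('i \<Rightarrow> 'k skel) \<Rightarrow> 'k skel" where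
  "sk_lincomb I u v = (\<lambda>a. \<Sum>p\<in>I. u p * v p a)"

definition sk_is_basis :: "'i set \<Rightarrow> ('i \<Rightarrow> 'k::field skel) \<Rightarrow> 'k skel set \<Rightarrow> bool" where
  "sk_is_basis I v V \<longleftrightarrow> finite I \<and> (\<forall>p\<in>I. v p \<in> V)
     \<and> (\<forall>u. sk_lincomb I u v = sk_zero \<longrightarrow> (\<forall>p\<in>I. u p = 0))
     \<and> (\<forall>f\<in>V. \<exists>u. f = sk_lincomb I u v)"

end

theory Submission
  imports Defs "HOL-Library.Function_Algebras"
begin

text \<open>Expanding \<open>b\<^sub>\<gamma>\<close> in the generators, the mixed terms \<open>x\<^sub>ix\<^sub>l\<close> of
  \<open>b\<^sub>kb\<^sub>m + b\<^sub>mb\<^sub>k\<close> cancel by anticommutativity, leaving a combination of the squares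
  \<open>x\<^sub>i\<^sup>2\<close> with weights \<open>\<omega>\<^bsup>i(k+m)\<^esup>\<close>. So \<open>c\<^sub>j\<close> only depends on
  \<open>k + m \<equiv> j (mod n)\<close>, and it is central because every \<open>x\<^sub>i\<^sup>2\<close> is.

  Conversely each \<open>x\<^sub>i\<close> is a discrete Fourier combination of the \<open>b\<^sub>\<gamma>\<close>, so every monomial
  is a linear combination of words in the \<open>b\<^sub>\<gamma>\<close>. The relations
  \<open>b\<^sub>gb\<^sub>i = c\<^sub>g\<^sub>+\<^sub>i - b\<^sub>ib\<^sub>g\<close> and \<open>b\<^sub>g\<^sup>2 = c\<^sub>2\<^sub>g/2\<close>, with the \<open>c\<^sub>j\<close> central,
  bring every word into the normal order of \<open>\<B>\<^sub>r\<close>, which therefore spans \<open>A\<^sub>r\<close>.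
  Writing each exponent as \<open>a\<^sub>s = i\<^sub>s + 2j\<^sub>s\<close> matches the index set of \<open>\<B>\<^sub>r\<close>
  bijectively with the monomials of degree \<open>r\<close>, so \<open>\<B>\<^sub>r\<close> has at most \<open>dim A\<^sub>r\<close>
  elements and is a basis.\<close>

lemma sum_apply: "(\<Sum>x\<in>A. F x) y = (\<Sum>x\<in>A. F x y)"
  by (induct A rule: infinite_finite_induct) auto

lemma sum_fun_upd_Suc:
  assumes "finite A" "j \<in> A"
  shows "(\<Sum>s\<in>A. (f(j := Suc (f j))) s) = Suc (\<Sum>s\<in>A. f s :: nat)"
  using assms by (simp add: sum.remove)

context vector_space
begin

lemma independent_if_spanning_card_le_dim:
  assumes "B \<subseteq> V" "V \<subseteq> span B" "finite B" "card B \<le> dim V"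
  shows "independent B"
proof -
  obtain B' where B': "B' \<subseteq> B" "independent B'" "B \<subseteq> span B'"
    by (rule maximal_independent_subset)
  have "V \<subseteq> span B'"
    using assms(2) B'(3) span_minimal[OF _ subspace_span] by blast
  then have "card B' = dim V"
    using B' assms(1) by (intro basis_card_eq_dim) auto
  then have "B' = B"
    using B'(1) assms(3,4) by (intro card_seteq) auto
  with B'(2) show ?thesis
    by simp
qed

end

definition sk_scale :: "'k::field \<Rightarrow> 'k skel \<Rightarrow> 'k skel" where
  "sk_scale c f = (\<lambda>a. c * f a)"

lemma sk_scale_apply [simp]: "sk_scale c f a = c * f a"
  by (simp add: sk_scale_def)

interpretation skel: vector_space "sk_scale :: 'k::field \<Rightarrow> 'k skel \<Rightarrow> 'k skel"
  by unfold_locales (simp_all add: fun_eq_iff algebra_simps)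

interpretation skel_pair: vector_space_pair
  "sk_scale :: 'k::field \<Rightarrow> 'k skel \<Rightarrow> 'k skel" "sk_scale :: 'k::field \<Rightarrow> 'k skel \<Rightarrow> 'k skel"
  by unfold_locales

abbreviation sk_linear :: "('k::field skel \<Rightarrow> 'k skel) \<Rightarrow> bool" where
  "sk_linear \<equiv> Vector_Spaces.linear sk_scale sk_scale"

lemma sk_linearI:
  assumes "\<And>f g. F (f + g) = F f + F g" and "\<And>c f. F (sk_scale c f) = sk_scale c (F f)"
  shows "sk_linear F"
  unfolding Vector_Spaces.linear_iff using assms skel.vector_space_axioms by blast

lemma sk_add_eq_plus: "sk_add f g = f + g"
  by (simp add: sk_add_def plus_fun_def)

lemma sk_zero_eq_zero: "sk_zero = 0"
  by (simp add: sk_zero_def zero_fun_def)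

lemma sk_lincomb_eq_sum: "sk_lincomb I u v = (\<Sum>p\<in>I. sk_scale (u p) (v p))"
  by (simp add: sk_lincomb_def fun_eq_iff sum_apply)

lemma sk_is_basisI:
  assumes "finite I" "inj_on v I" "v ` I \<subseteq> V" "V \<subseteq> skel.span (v ` I)" "skel.independent (v ` I)"
  shows "sk_is_basis I v V"
  unfolding sk_is_basis_def
proof (intro conjI ballI allI impI)
  show "finite I" "\<And>p. p \<in> I \<Longrightarrow> v p \<in> V"
    using assms(1,3) by auto
next
  fix u p assume u: "sk_lincomb I u v = sk_zero" and p: "p \<in> I"
  have "(\<Sum>x\<in>v ` I. sk_scale (u (the_inv_into I v x)) x) = 0"
    using u assms(2) by (simp add: sk_lincomb_eq_sum sum.reindex the_inv_into_f_f sk_zero_eq_zero)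
  then have "u (the_inv_into I v (v p)) = 0"
    using skel.independent_explicit_finite_subsets[THEN iffD1, OF assms(5), rule_format,
        OF order_refl finite_imageI[OF assms(1)], of "\<lambda>x. u (the_inv_into I v x)" "v p"] p
    by blast
  then show "u p = 0"
    using assms(2) p by (simp add: the_inv_into_f_f)
next
  fix f assume "f \<in> V"
  then obtain c where "f = (\<Sum>x\<in>v ` I. sk_scale (c x) x)"
    using assms(1,4) skel.span_finite[of "v ` I"] by blast
  then have "f = sk_lincomb I (\<lambda>p. c (v p)) v"
    using assms(2) by (simp add: sk_lincomb_eq_sum sum.reindex)
  then show "\<exists>u. f = sk_lincomb I u v"
    by blast
qed

lemma sk_is_basis_if_spanning_card_le_dim:
  assumes "finite I" "v ` I \<subseteq> V" "V \<subseteq> skel.span (v ` I)" "card I \<le> skel.dim V"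
  shows "sk_is_basis I v V"
proof -
  have card_le: "card (v ` I) \<le> card I"
    using assms(1) by (rule card_image_le)
  have indep: "skel.independent (v ` I)"
    using assms card_le by (intro skel.independent_if_spanning_card_le_dim[of _ V]) auto
  then have "card (v ` I) = skel.dim V"
    using assms(2,3) by (intro skel.basis_card_eq_dim)
  then have "inj_on v I"
    using assms(1,4) card_le by (intro eq_card_imp_inj_on) auto
  with assms indep show ?thesis
    by (intro sk_is_basisI)
qed

definition exp_vec :: "nat \<Rightarrow> (nat \<Rightarrow> nat) \<Rightarrow> bool" where
  "exp_vec n a \<longleftrightarrow> (\<forall>i\<ge>n. a i = 0)"

definition sk_mon :: "(nat \<Rightarrow> nat) \<Rightarrow> 'k::field skel" where
  "sk_mon a = (\<lambda>b. if b = a then 1 else 0)"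

definition unit_exp :: "nat \<Rightarrow> nat \<Rightarrow> nat" where
  "unit_exp i = (\<lambda>j. if j = i then 1 else 0)"

lemma exp_vec_0 [simp]: "exp_vec n 0"
  by (simp add: exp_vec_def)

lemma exp_vec_add [simp]: "exp_vec n a \<Longrightarrow> exp_vec n b \<Longrightarrow> exp_vec n (a + b)"
  by (simp add: exp_vec_def)

lemma exp_vec_unit_exp: "i < n \<Longrightarrow> exp_vec n (unit_exp i)"
  by (simp add: exp_vec_def unit_exp_def)

lemma sum_unit_exp: "i < n \<Longrightarrow> (\<Sum>j<n. unit_exp i j) = 1"
  by (simp add: unit_exp_def)

lemma sk_x_eq_mon: "sk_x i = sk_mon (unit_exp i)"
  by (simp add: sk_x_def sk_mon_def unit_exp_def fun_eq_iff)

lemma sk_one_eq_mon: "sk_one = sk_mon 0"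
  by (simp add: sk_one_def sk_mon_def fun_eq_iff zero_fun_def)

lemma inj_sk_mon: "inj (sk_mon :: _ \<Rightarrow> 'k::field skel)"
proof (rule injI)
  fix a b :: "nat \<Rightarrow> nat"
  assume "(sk_mon a :: 'k skel) = sk_mon b"
  then have "(sk_mon a :: 'k skel) a = sk_mon b a" by simp
  then show "a = b" by (simp add: sk_mon_def split: if_splits)
qed

lemma finite_exp_vec_below:
  assumes "exp_vec n c"
  shows "finite {a. \<forall>i. a i \<le> c i}"
proof (rule finite_subset)
  let ?m = "\<Sum>i<n. c i"
  show "{a. \<forall>i. a i \<le> c i} \<subseteq> {a. \<forall>i. (i \<in> {..<n} \<longrightarrow> a i \<in> {..?m}) \<and> (i \<notin> {..<n} \<longrightarrow> a i = 0)}"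
  proof (intro subsetI CollectI allI conjI impI)
    fix a assume "a \<in> {a. \<forall>i. a i \<le> c i}"
    then have a: "\<forall>i. a i \<le> c i" by simp
    show "a i \<in> {..?m}" if "i \<in> {..<n}" for i
      using a[rule_format, of i] member_le_sum[of i "{..<n}" c] that by simp
    show "a i = 0" if "i \<notin> {..<n}" for i
      using a[rule_format, of i] assms that by (simp add: exp_vec_def)
  qed
qed (intro finite_set_of_finite_funs; simp)

lemma skA_sum_mon:
  assumes "f \<in> skA n"
  shows "f = (\<Sum>a\<in>{a. f a \<noteq> 0}. sk_scale (f a) (sk_mon a))"
proof
  fix c
  have "(\<Sum>a\<in>{a. f a \<noteq> 0}. sk_scale (f a) (sk_mon a)) c = (\<Sum>a\<in>{a. f a \<noteq> 0}. if a = c then f c else 0)"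
    unfolding sum_apply by (intro sum.cong) (auto simp: sk_mon_def)
  also have "\<dots> = f c"
    using assms by (simp add: skA_def sum.delta)
  finally show "f c = (\<Sum>a\<in>{a. f a \<noteq> 0}. sk_scale (f a) (sk_mon a)) c" ..
qed

lemma skA_subset_span_mon: "skA n \<subseteq> skel.span (sk_mon ` {a. exp_vec n a})"
proof
  fix f assume f: "f \<in> skA n"
  have "(\<Sum>a\<in>{a. f a \<noteq> 0}. sk_scale (f a) (sk_mon a)) \<in> skel.span (sk_mon ` {a. exp_vec n a})"
    using f by (intro skel.span_sum skel.span_scale skel.span_base imageI) (simp add: skA_def exp_vec_def)
  then show "f \<in> skel.span (sk_mon ` {a. exp_vec n a})"
    using skA_sum_mon[OF f] by simp
qed

lemma sk_linear_eq_on_skA: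
  assumes "sk_linear L" "sk_linear R" "\<And>a. exp_vec n a \<Longrightarrow> L (sk_mon a) = R (sk_mon a)"
    and "f \<in> skA n"
  shows "L f = R f"
proof (rule skel_pair.linear_eq_on[OF assms(1,2)])
  show "f \<in> skel.span (sk_mon ` {a. exp_vec n a})"
    using assms(4) skA_subset_span_mon by blast
qed (use assms(3) in blast)

section \<open>The twisted multiplication\<close>

lemma sk_mul_mon:
  assumes "exp_vec n a" "exp_vec n b"
  shows "sk_mul n (sk_mon a) (sk_mon b) = sk_scale (sk_sign n a b) (sk_mon (a + b))"
proof
  fix c :: "nat \<Rightarrow> nat"
  have term_eq: "sk_sign n a' (\<lambda>i. c i - a' i) * sk_mon a a' * sk_mon b (\<lambda>i. c i - a' i)
      = (if c = a + b \<and> a' = a then sk_sign n a b else 0)" if "\<forall>i. a' i \<le> c i" for a'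
    using that by (auto simp: sk_mon_def fun_eq_iff) (metis le_add_diff_inverse)+
  have "sk_mul n (sk_mon a) (sk_mon b) c
      = (\<Sum>a'\<in>{a'. \<forall>i. a' i \<le> c i}. if c = a + b \<and> a' = a then sk_sign n a b else 0)"
    unfolding sk_mul_def by (intro sum.cong refl) (simp add: term_eq)
  also have "\<dots> = (if c = a + b then sk_sign n a b else 0)"
    using finite_exp_vec_below[of n "a + b"] assms by (auto simp: sum.delta')
  also have "\<dots> = sk_scale (sk_sign n a b) (sk_mon (a + b)) c"
    by (simp add: sk_mon_def)
  finally show "sk_mul n (sk_mon a) (sk_mon b) c = sk_scale (sk_sign n a b) (sk_mon (a + b)) c" .
qed

lemma sk_sign_cocycle:
  "sk_sign n a b * (sk_sign n (a + b) c :: 'k::field) = sk_sign n a (b + c) * sk_sign n b c"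
  unfolding sk_sign_def power_add[symmetric]
  by (rule arg_cong[where f="\<lambda>x. (-1) ^ x"])
     (simp only: plus_fun_apply distrib_left distrib_right sum.distrib add.assoc)

lemma sk_sign_0 [simp]: "sk_sign n 0 a = 1" "sk_sign n a 0 = 1"
  by (simp_all add: sk_sign_def)

lemma sk_sign_square: "sk_sign n a b * sk_sign n a b = (1::'k::field)"
  by (simp add: sk_sign_def power_mult_distrib[symmetric])

lemma sk_sign_even:
  assumes "\<forall>i. even (a i)"
  shows "sk_sign n a b = (1::'k::field)" "sk_sign n b a = (1::'k::field)"
  using assms by (simp_all add: sk_sign_def dvd_sum)

lemma sk_mul_add_left: "sk_mul n (f + g) h = sk_mul n f h + sk_mul n g h"
  by (simp add: sk_mul_def fun_eq_iff sum.distrib[symmetric] algebra_simps)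

lemma sk_mul_add_right: "sk_mul n f (g + h) = sk_mul n f g + sk_mul n f h"
  by (simp add: sk_mul_def fun_eq_iff sum.distrib[symmetric] algebra_simps)

lemma sk_mul_scale_left: "sk_mul n (sk_scale c f) h = sk_scale c (sk_mul n f h)"
  by (simp add: sk_mul_def fun_eq_iff sum_distrib_left algebra_simps)

lemma sk_mul_scale_right: "sk_mul n f (sk_scale c h) = sk_scale c (sk_mul n f h)"
  by (simp add: sk_mul_def fun_eq_iff sum_distrib_left algebra_simps)

lemma sk_linear_mul_left: "sk_linear (\<lambda>f. sk_mul n f h)"
  by (intro sk_linearI sk_mul_add_left sk_mul_scale_left)

lemma sk_linear_mul_right: "sk_linear (sk_mul n f)"
  by (intro sk_linearI sk_mul_add_right sk_mul_scale_right)

lemma sk_mul_diff_left: "sk_mul n (f - g) h = sk_mul n f h - sk_mul n g h"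
  by (rule skel_pair.linear_diff[OF sk_linear_mul_left])

lemma sk_mul_sum_left: "sk_mul n (\<Sum>x\<in>A. F x) h = (\<Sum>x\<in>A. sk_mul n (F x) h)"
  by (rule skel_pair.linear_sum[OF sk_linear_mul_left])

lemma sk_mul_sum_right: "sk_mul n h (\<Sum>x\<in>A. F x) = (\<Sum>x\<in>A. sk_mul n h (F x))"
  by (rule skel_pair.linear_sum[OF sk_linear_mul_right])

lemma sk_linear_compose: "sk_linear F \<Longrightarrow> sk_linear G \<Longrightarrow> sk_linear (\<lambda>x. F (G x))"
  using Vector_Spaces.linear_compose[of sk_scale sk_scale G sk_scale F] by (simp add: comp_def)

lemma sk_mul_assoc_mon:
  assumes "exp_vec n a" "exp_vec n b" "exp_vec n c"
  shows "sk_mul n (sk_mul n (sk_mon a) (sk_mon b)) (sk_mon c)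
       = sk_mul n (sk_mon a) (sk_mul n (sk_mon b) (sk_mon c))"
  using assms by (simp add: sk_mul_mon sk_mul_scale_left sk_mul_scale_right sk_sign_cocycle add.assoc)

text \<open>Associativity is trilinear, so it suffices to check it on monomials, one argument at a time.\<close>

lemma sk_mul_assoc:
  assumes "f \<in> skA n" "g \<in> skA n" "h \<in> skA n"
  shows "sk_mul n (sk_mul n f g) h = sk_mul n f (sk_mul n g h)"
proof -
  have mon_mon: "sk_mul n (sk_mul n (sk_mon a) (sk_mon b)) h = sk_mul n (sk_mon a) (sk_mul n (sk_mon b) h)"
    if "exp_vec n a" "exp_vec n b" for a b
    by (rule sk_linear_eq_on_skA[OF sk_linear_mul_right
          sk_linear_compose[OF sk_linear_mul_right sk_linear_mul_right] _ assms(3)])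
      (use that sk_mul_assoc_mon in blast)
  have mon: "sk_mul n (sk_mul n (sk_mon a) g) h = sk_mul n (sk_mon a) (sk_mul n g h)"
    if "exp_vec n a" for a
    by (rule sk_linear_eq_on_skA[where L="\<lambda>g. sk_mul n (sk_mul n (sk_mon a) g) h",
          OF sk_linear_compose[OF sk_linear_mul_left sk_linear_mul_right]
          sk_linear_compose[OF sk_linear_mul_right sk_linear_mul_left] _ assms(2)])
      (use that mon_mon in blast)
  show ?thesis
    by (rule sk_linear_eq_on_skA[where L="\<lambda>f. sk_mul n (sk_mul n f g) h",
          OF sk_linear_compose[OF sk_linear_mul_left sk_linear_mul_left] sk_linear_mul_left _ assms(1)])
      (use mon in blast)
qed

lemma support_sk_mul:
  "{c. sk_mul n f g c \<noteq> 0} \<subseteq> (\<lambda>(a, b). a + b) ` ({a. f a \<noteq> 0} \<times> {b. g b \<noteq> 0})"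
proof
  fix c assume "c \<in> {c. sk_mul n f g c \<noteq> 0}"
  then obtain a where a: "\<forall>i. a i \<le> c i"
    and t: "sk_sign n a (\<lambda>i. c i - a i) * f a * g (\<lambda>i. c i - a i) \<noteq> 0"
    unfolding sk_mul_def by (auto elim: sum.not_neutral_contains_not_neutral)
  have "c = a + (\<lambda>i. c i - a i)"
    using a by (auto simp: fun_eq_iff)
  with t show "c \<in> (\<lambda>(a, b). a + b) ` ({a. f a \<noteq> 0} \<times> {b. g b \<noteq> 0})"
    by (intro image_eqI[of _ _ "(a, \<lambda>i. c i - a i)"]) auto
qed

lemma skA_deg_subset: "skA_deg n r \<subseteq> skA n"
  by (auto simp: skA_deg_def)

lemma skA_mul: "f \<in> skA n \<Longrightarrow> g \<in> skA n \<Longrightarrow> sk_mul n f g \<in> skA n"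
  using support_sk_mul[of n f g]
  by (auto simp: skA_def intro: finite_subset)

lemma skA_deg_mul: "f \<in> skA_deg n r \<Longrightarrow> g \<in> skA_deg n s \<Longrightarrow> sk_mul n f g \<in> skA_deg n (r + s)"
  using support_sk_mul[of n f g] skA_mul[of f n g]
  by (auto simp: skA_deg_def sum.distrib)

lemma skA_deg_add: "f \<in> skA_deg n r \<Longrightarrow> g \<in> skA_deg n r \<Longrightarrow> f + g \<in> skA_deg n r"
proof -
  assume f: "f \<in> skA_deg n r" and g: "g \<in> skA_deg n r"
  have "{a. (f + g) a \<noteq> 0} \<subseteq> {a. f a \<noteq> 0} \<union> {a. g a \<noteq> 0}"
    by auto
  with f g show ?thesis
    by (auto simp: skA_deg_def skA_def intro: finite_subset)
qed

lemma skA_deg_scale: "f \<in> skA_deg n r \<Longrightarrow> sk_scale c f \<in> skA_deg n r"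
  by (auto simp: skA_deg_def skA_def intro: finite_subset)

lemma skA_deg_zero: "0 \<in> skA_deg n r"
  by (simp add: skA_deg_def skA_def)

lemma skA_deg_sum: "(\<And>x. x \<in> A \<Longrightarrow> F x \<in> skA_deg n r) \<Longrightarrow> (\<Sum>x\<in>A. F x) \<in> skA_deg n r"
  by (induct A rule: infinite_finite_induct) (auto simp: skA_deg_zero skA_deg_add)

lemma skA_deg_mon: "exp_vec n a \<Longrightarrow> sk_mon a \<in> skA_deg n (\<Sum>i<n. a i)"
  by (auto simp: skA_deg_def skA_def sk_mon_def exp_vec_def)

definition exps_deg :: "nat \<Rightarrow> nat \<Rightarrow> (nat \<Rightarrow> nat) set" where
  "exps_deg n r = {a. exp_vec n a \<and> (\<Sum>i<n. a i) = r}"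

lemma finite_exps_deg: "finite (exps_deg n r)"
proof (rule finite_subset)
  show "exps_deg n r \<subseteq> {a. \<forall>i. a i \<le> (if i < n then r else 0)}"
    by (auto simp: exps_deg_def exp_vec_def intro: member_le_sum[of _ "{..<n}", simplified])
  show "finite {a. \<forall>i. a i \<le> (if i < n then r else 0)}"
    by (rule finite_exp_vec_below[of n]) (simp add: exp_vec_def)
qed

lemma skA_deg_subset_span_mon: "skA_deg n r \<subseteq> skel.span (sk_mon ` exps_deg n r)"
proof
  fix f assume f: "f \<in> skA_deg n r"
  have "(\<Sum>a\<in>{a. f a \<noteq> 0}. sk_scale (f a) (sk_mon a)) \<in> skel.span (sk_mon ` exps_deg n r)"
    using f by (intro skel.span_sum skel.span_scale skel.span_base imageI)
      (auto simp: skA_deg_def skA_def exps_deg_def exp_vec_def)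
  then show "f \<in> skel.span (sk_mon ` exps_deg n r)"
    using skA_sum_mon[OF subsetD[OF skA_deg_subset f]] by simp
qed

lemma skA_deg_one: "sk_one \<in> skA_deg n 0"
  using skA_deg_mon[of n 0] by (simp add: sk_one_eq_mon)

lemma skA_one: "sk_one \<in> skA n"
  using skA_deg_one skA_deg_subset by blast

lemma sk_mul_one_left: "f \<in> skA n \<Longrightarrow> sk_mul n sk_one f = f"
  by (rule sk_linear_eq_on_skA[where R="\<lambda>f. f", OF sk_linear_mul_right sk_linearI])
     (simp_all add: sk_one_eq_mon sk_mul_mon)

lemma sk_mul_one_right: "f \<in> skA n \<Longrightarrow> sk_mul n f sk_one = f"
  by (rule sk_linear_eq_on_skA[where R="\<lambda>f. f", OF sk_linear_mul_left sk_linearI])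
     (simp_all add: sk_one_eq_mon sk_mul_mon)

lemma sk_prod_Cons: "sk_prod n (f # fs) = sk_mul n f (sk_prod n fs)"
  by (simp add: sk_prod_def)

lemma sk_prod_Nil: "sk_prod n [] = sk_one"
  by (simp add: sk_prod_def)

lemma skA_deg_prod_map:
  "(\<And>x. x \<in> set xs \<Longrightarrow> F x \<in> skA_deg n (d x)) \<Longrightarrow>
    sk_prod n (map F xs) \<in> skA_deg n (\<Sum>x\<leftarrow>xs. d x)"
  by (induct xs) (auto simp: sk_prod_Nil sk_prod_Cons skA_deg_one intro: skA_deg_mul)

lemma skA_prod: "(\<And>f. f \<in> set fs \<Longrightarrow> f \<in> skA n) \<Longrightarrow> sk_prod n fs \<in> skA n"
  using skA_deg_one skA_deg_subset
  by (induct fs) (auto simp: sk_prod_Nil sk_prod_Cons intro: skA_mul)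

lemma sk_prod_append:
  assumes "\<And>f. f \<in> set fs \<Longrightarrow> f \<in> skA n" "\<And>g. g \<in> set gs \<Longrightarrow> g \<in> skA n"
  shows "sk_prod n (fs @ gs) = sk_mul n (sk_prod n fs) (sk_prod n gs)"
  using assms(1)
  by (induct fs) (simp_all add: sk_prod_Nil sk_prod_Cons sk_mul_one_left skA_prod assms(2) sk_mul_assoc)

lemma sk_pow_0: "sk_pow n f 0 = sk_one"
  by (simp add: sk_pow_def)

lemma sk_pow_Suc: "sk_pow n f (Suc k) = sk_mul n f (sk_pow n f k)"
  by (simp add: sk_pow_def)

lemma skA_deg_pow: "f \<in> skA_deg n d \<Longrightarrow> sk_pow n f k \<in> skA_deg n (k * d)"
  by (induct k) (auto simp: sk_pow_0 sk_pow_Suc skA_deg_one dest: skA_deg_mul)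

section \<open>The elements \<open>b\<^sub>\<gamma>\<close> and \<open>c\<^sub>j\<close>\<close>

lemma power_mod_eq_if_power_eq_1:
  assumes "w ^ n = (1::'a::monoid_mult)" "a mod n = b mod n"
  shows "w ^ a = w ^ b"
proof -
  have "w ^ m = w ^ (m mod n)" for m
  proof -
    have "w ^ m = w ^ (n * (m div n) + m mod n)"
      by simp
    also have "\<dots> = (w ^ n) ^ (m div n) * w ^ (m mod n)"
      by (simp only: power_add power_mult)
    finally show ?thesis
      using assms(1) by simp
  qed
  from this[of a] this[of b] show ?thesis
    using assms(2) by simp
qed

lemma dvd_diff_add_iff:
  assumes "i < n" "l < (n::nat)"
  shows "n dvd (n - i + l) \<longleftrightarrow> l = i"
proof (cases "i \<le> l")
  case True
  have "l - i < n"
    using assms(2) by simp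
  then have "n dvd (l - i) \<longleftrightarrow> l = i"
    using True nat_dvd_not_less[of "l - i" n] by auto
  moreover have "n - i + l = n + (l - i)"
    using True assms(1) by simp
  ultimately show ?thesis
    by simp
next
  case False
  then show ?thesis
    using assms nat_dvd_not_less[of "n - i + l" n] by auto
qed

lemma sk_b_eq_sum_mon: "sk_b n w g = (\<Sum>i<n. sk_scale (w ^ (i * g) / of_nat n) (sk_mon (unit_exp i)))"
  by (simp add: fun_eq_iff sum_apply sk_b_def sk_x_eq_mon sum_distrib_left)

lemma skA_deg_b: "sk_b n w g \<in> skA_deg n 1"
  unfolding sk_b_eq_sum_mon
proof (intro skA_deg_sum skA_deg_scale)
  fix i assume "i \<in> {..<n}"
  then show "sk_mon (unit_exp i) \<in> skA_deg n 1"
    using skA_deg_mon[OF exp_vec_unit_exp, of i n] by (simp add: sum_unit_exp)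
qed

lemma sk_sign_unit_exp:
  assumes "i < n" "l < n"
  shows "sk_sign n (unit_exp i) (unit_exp l) = (if l < i then -1 else (1::'k::field))"
proof -
  have "(\<Sum>p<n. \<Sum>q<p. unit_exp i p * unit_exp l q)
      = (\<Sum>p<n. if p = i then (\<Sum>q<p. unit_exp l q) else 0)"
    by (intro sum.cong refl) (simp add: unit_exp_def)
  also have "\<dots> = (\<Sum>q<i. unit_exp l q)"
    using assms(1) by simp
  also have "\<dots> = (if l < i then 1 else 0)"
    by (simp add: unit_exp_def)
  finally show ?thesis
    by (simp add: sk_sign_def)
qed

definition sk_quad :: "nat \<Rightarrow> (nat \<Rightarrow> nat \<Rightarrow> 'k::field) \<Rightarrow> 'k skel" where
  "sk_quad n k = (\<Sum>i<n. \<Sum>l<n. sk_scale (k i l) (sk_mon (unit_exp i + unit_exp l)))"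

lemma sk_quad_swap: "sk_quad n k = sk_quad n (\<lambda>i l. k l i)"
  unfolding sk_quad_def by (subst sum.swap) (simp add: add.commute)

lemma sk_quad_add: "sk_quad n k + sk_quad n k' = sk_quad n (\<lambda>i l. k i l + k' i l)"
  by (simp add: sk_quad_def sum.distrib[symmetric] fun_eq_iff sum_apply algebra_simps)

lemma sk_quad_diagonal:
  assumes "\<And>i l. i < n \<Longrightarrow> l < n \<Longrightarrow> i \<noteq> l \<Longrightarrow> k i l = 0"
  shows "sk_quad n k = (\<Sum>i<n. sk_scale (k i i) (sk_mon (unit_exp i + unit_exp i)))"
  unfolding sk_quad_def
proof (rule sum.cong[OF refl])
  fix i assume "i \<in> {..<n}"
  then have "(\<Sum>l<n. sk_scale (k i l) (sk_mon (unit_exp i + unit_exp l)))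
      = (\<Sum>l<n. if l = i then sk_scale (k i i) (sk_mon (unit_exp i + unit_exp i)) else 0)"
    using assms by (intro sum.cong) (auto simp: fun_eq_iff)
  with \<open>i \<in> {..<n}\<close> show "(\<Sum>l<n. sk_scale (k i l) (sk_mon (unit_exp i + unit_exp l)))
      = sk_scale (k i i) (sk_mon (unit_exp i + unit_exp i))"
    by (simp add: sum.delta')
qed

lemma sk_mul_b_b: "sk_mul n (sk_b n w k) (sk_b n w m) =
  sk_quad n (\<lambda>i l. w ^ (i * k) / of_nat n * (w ^ (l * m) / of_nat n) * sk_sign n (unit_exp i) (unit_exp l))"
  unfolding sk_b_eq_sum_mon sk_quad_def sk_mul_sum_left
  by (intro sum.cong refl)
     (simp add: sk_mul_sum_right sk_mul_scale_left sk_mul_scale_right sk_mul_mon exp_vec_unit_exp mult_ac)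

definition c_diag :: "nat \<Rightarrow> 'k::field \<Rightarrow> nat \<Rightarrow> 'k skel" where
  "c_diag n w j = (\<Sum>i<n. sk_scale (2 * w ^ (i * j) / (of_nat n)\<^sup>2) (sk_mon (unit_exp i + unit_exp i)))"

lemma sk_c_eq_c_diag:
  assumes w: "w ^ n = (1::'k::field)" and j: "j < n" and k: "k < n"
  shows "sk_c n w j k = c_diag n w j"
proof -
  let ?m = "(j + n - k) mod n"
  let ?a = "\<lambda>i. w ^ (i * k) / of_nat n" and ?b = "\<lambda>i. w ^ (i * ?m) / of_nat n"
  let ?s = "\<lambda>i l. sk_sign n (unit_exp i) (unit_exp l) :: 'k"
  have "sk_c n w j k = sk_quad n (\<lambda>i l. ?a i * ?b l * ?s i l) + sk_quad n (\<lambda>i l. ?b l * ?a i * ?s l i)"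
    unfolding sk_c_def sk_add_eq_plus sk_mul_b_b by (subst (2) sk_quad_swap) simp
  also have "\<dots> = (\<Sum>i<n. sk_scale (?a i * ?b i * ?s i i + ?b i * ?a i * ?s i i)
      (sk_mon (unit_exp i + unit_exp i)))"
    unfolding sk_quad_add by (rule sk_quad_diagonal) (auto simp: sk_sign_unit_exp algebra_simps)
  also have "\<dots> = c_diag n w j"
    unfolding c_diag_def
  proof (intro sum.cong refl arg_cong2[where f=sk_scale])
    fix i assume i: "i \<in> {..<n}"
    have "(k + ?m) mod n = (k + (j + n - k)) mod n"
      by (simp add: mod_add_right_eq)
    also have "\<dots> = j"
      using j k by simp
    finally have "(i * (k + ?m)) mod n = (i * j) mod n"
      by (metis mod_mult_right_eq)
    then have "w ^ (i * k) * w ^ (i * ?m) = w ^ (i * j)"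
      unfolding power_add[symmetric] distrib_left[symmetric] by (rule power_mod_eq_if_power_eq_1[OF w])
    then show "?a i * ?b i * ?s i i + ?b i * ?a i * ?s i i = 2 * w ^ (i * j) / (of_nat n)\<^sup>2"
      using i by (simp add: sk_sign_unit_exp power2_eq_square field_simps)
  qed
  finally show ?thesis .
qed

text \<open>Each \<open>x\<^sub>i\<^sup>2\<close> is central, since every sign exponent against an even exponent vector is even.\<close>

lemma c_diag_central:
  assumes f: "f \<in> skA n"
  shows "sk_mul n (c_diag n w j) f = sk_mul n f (c_diag n w j)"
proof -
  have "sk_mul n (sk_mon (unit_exp i + unit_exp i)) f = sk_mul n f (sk_mon (unit_exp i + unit_exp i))"
    if "i < n" for i
  proof (rule sk_linear_eq_on_skA[OF sk_linear_mul_right sk_linear_mul_left _ f])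
    fix a assume "exp_vec n a"
    moreover have "\<forall>x. even ((unit_exp i + unit_exp i) x)"
      by simp
    ultimately show "sk_mul n (sk_mon (unit_exp i + unit_exp i)) (sk_mon a)
        = sk_mul n (sk_mon a) (sk_mon (unit_exp i + unit_exp i))"
      using that by (simp add: sk_mul_mon exp_vec_unit_exp sk_sign_even add.commute)
  qed
  then show ?thesis
    unfolding c_diag_def sk_mul_sum_left sk_mul_sum_right
    by (intro sum.cong refl) (simp add: sk_mul_scale_left sk_mul_scale_right)
qed

lemma skA_deg_sk_c: "sk_c n w j k \<in> skA_deg n 2"
proof -
  have "sk_mul n (sk_b n w k) (sk_b n w m) \<in> skA_deg n 2" for k m
    using skA_deg_mul[OF skA_deg_b skA_deg_b] by (simp add: numeral_2_eq_2)
  then show ?thesis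
    unfolding sk_c_def sk_add_eq_plus by (intro skA_deg_add)
qed

lemma skA_sk_c: "sk_c n w j k \<in> skA n"
  using skA_deg_sk_c skA_deg_subset by blast

lemma skA_pow: "f \<in> skA_deg n d \<Longrightarrow> sk_pow n f k \<in> skA n"
  using skA_deg_pow skA_deg_subset by blast

lemma sk_mul_central_prod:
  assumes z: "z \<in> skA n" "\<And>f. f \<in> skA n \<Longrightarrow> sk_mul n z f = sk_mul n f z"
    and F: "\<And>x. F x \<in> skA n" and "distinct xs" "j \<in> set xs"
  shows "sk_mul n z (sk_prod n (map F xs)) = sk_prod n (map (F(j := sk_mul n z (F j))) xs)"
  using assms(4,5)
proof (induct xs)
  case (Cons y ys)
  have ys: "sk_prod n (map F ys) \<in> skA n"
    by (rule skA_prod) (auto simp: F)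
  have z_y: "sk_mul n z (sk_prod n (map F (y # ys))) = sk_mul n (sk_mul n z (F y)) (sk_prod n (map F ys))"
    by (simp add: sk_prod_Cons sk_mul_assoc z(1) F ys)
  show ?case
  proof (cases "y = j")
    case True
    with Cons.prems have "j \<notin> set ys"
      by simp
    with True have "sk_prod n (map (F(j := sk_mul n z (F j))) (y # ys))
        = sk_mul n (sk_mul n z (F y)) (sk_prod n (map F ys))"
      by (simp add: sk_prod_Cons)
    then show ?thesis
      by (simp only: z_y)
  next
    case False
    have IH: "sk_mul n z (sk_prod n (map F ys)) = sk_prod n (map (F(j := sk_mul n z (F j))) ys)"
      by (rule Cons.hyps) (use Cons.prems False in auto)
    have "sk_mul n z (sk_prod n (map F (y # ys))) = sk_mul n (sk_mul n (F y) z) (sk_prod n (map F ys))"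
      by (simp only: z_y z(2)[OF F])
    also have "\<dots> = sk_mul n (F y) (sk_prod n (map (F(j := sk_mul n z (F j))) ys))"
      by (simp only: sk_mul_assoc z(1) F ys IH)
    also have "\<dots> = sk_prod n (map (F(j := sk_mul n z (F j))) (y # ys))"
      using False by (simp add: sk_prod_Cons)
    finally show ?thesis .
  qed
qed simp

lemma sk_mul_span:
  assumes "y \<in> skel.span S" "\<And>s. s \<in> S \<Longrightarrow> sk_mul n x s \<in> skel.span T"
  shows "sk_mul n x y \<in> skel.span T"
proof -
  have "sk_mul n x y \<in> skel.span (sk_mul n x ` S)"
    using assms(1) skel_pair.linear_span_image[OF sk_linear_mul_right[of n x]] by blast
  also have "\<dots> \<subseteq> skel.span T"
    using assms(2) by (intro skel.span_minimal skel.subspace_span) blast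
  finally show ?thesis .
qed

section \<open>Normally ordered words\<close>

definition b_word :: "nat \<Rightarrow> 'k::field \<Rightarrow> nat list \<Rightarrow> 'k skel" where
  "b_word n w L = sk_prod n (map (sk_b n w) L)"

definition c_word :: "nat \<Rightarrow> 'k::field \<Rightarrow> (nat \<Rightarrow> nat) \<Rightarrow> 'k skel" where
  "c_word n w jv = sk_prod n (map (\<lambda>g. sk_pow n (sk_c n w g 0) (jv g)) [0..<n])"

definition std_words :: "nat \<Rightarrow> 'k::field \<Rightarrow> nat set \<Rightarrow> nat \<Rightarrow> 'k skel set" where
  "std_words n w S d = {sk_mul n (b_word n w L) (c_word n w jv) | L jv. sorted_wrt (<) L
     \<and> set L \<subseteq> S \<and> (\<forall>s\<ge>n. jv s = 0) \<and> length L + 2 * (\<Sum>s<n. jv s) = d}"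

lemma std_wordsI:
  "sorted_wrt (<) L \<Longrightarrow> set L \<subseteq> S \<Longrightarrow> \<forall>s\<ge>n. jv s = 0 \<Longrightarrow>
    sk_mul n (b_word n w L) (c_word n w jv) \<in> std_words n w S (length L + 2 * (\<Sum>s<n. jv s))"
  unfolding std_words_def by blast

lemma std_words_mono: "S \<subseteq> S' \<Longrightarrow> std_words n w S d \<subseteq> std_words n w S' d"
  unfolding std_words_def by blast

lemma skA_deg_b_word: "b_word n w L \<in> skA_deg n (length L)"
proof -
  have "sk_prod n (map (sk_b n w) L) \<in> skA_deg n (\<Sum>x\<leftarrow>L. 1)"
    by (rule skA_deg_prod_map) (rule skA_deg_b)
  then show ?thesis
    by (simp add: b_word_def sum_list_triv)
qed

lemma skA_deg_c_word: "c_word n w jv \<in> skA_deg n (2 * (\<Sum>s<n. jv s))"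
proof -
  have "c_word n w jv \<in> skA_deg n (\<Sum>g\<leftarrow>[0..<n]. jv g * 2)"
    unfolding c_word_def by (intro skA_deg_prod_map skA_deg_pow skA_deg_sk_c)
  then show ?thesis
    by (simp add: interv_sum_list_conv_sum_set_nat atLeast0LessThan sum_distrib_left mult.commute)
qed

lemma b_word_Cons: "b_word n w (i # L) = sk_mul n (sk_b n w i) (b_word n w L)"
  by (simp add: b_word_def sk_prod_Cons)

lemma skA_b_word: "b_word n w L \<in> skA n" and skA_c_word: "c_word n w jv \<in> skA n"
  using skA_deg_b_word skA_deg_c_word skA_deg_subset by blast+

lemma skA_b: "sk_b n w g \<in> skA n"
  using skA_deg_b skA_deg_subset by blast

lemma std_words_subset_skA_deg: "std_words n w S d \<subseteq> skA_deg n d"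
  unfolding std_words_def using skA_deg_mul[OF skA_deg_b_word skA_deg_c_word] by auto

lemma c_word_zero: "c_word n w (\<lambda>_. 0) = sk_one"
proof -
  have "sk_prod n (map (\<lambda>_. sk_one) xs) = sk_one" for xs :: "nat list"
    by (induct xs) (simp_all add: sk_prod_Nil sk_prod_Cons sk_mul_one_left skA_one)
  then show ?thesis
    by (simp add: c_word_def sk_pow_0)
qed

lemma sk_one_in_std_words: "sk_one \<in> std_words n w S 0"
  using std_wordsI[of "[]" S n "\<lambda>_. 0" w]
  by (simp add: c_word_zero b_word_def sk_prod_Nil sk_mul_one_left skA_one)

lemma b_mul_std_word_prepend:
  assumes "s \<in> std_words n w T d" "\<forall>x\<in>T. i < x"
  shows "sk_mul n (sk_b n w i) s \<in> std_words n w (insert i T) (Suc d)"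
proof -
  obtain L jv where s: "s = sk_mul n (b_word n w L) (c_word n w jv)"
    and L: "sorted_wrt (<) L" "set L \<subseteq> T" "\<forall>s\<ge>n. jv s = 0" "length L + 2 * (\<Sum>s<n. jv s) = d"
    using assms(1) unfolding std_words_def by blast
  have "sk_mul n (sk_b n w i) s = sk_mul n (b_word n w (i # L)) (c_word n w jv)"
    by (simp add: s b_word_Cons sk_mul_assoc skA_b skA_b_word skA_c_word)
  also have "\<dots> \<in> std_words n w (insert i T) (Suc d)"
    using std_wordsI[of "i # L" "insert i T" n jv w] L assms(2) by auto
  finally show ?thesis .
qed

lemma b_mul_span_std_words_prepend:
  assumes "y \<in> skel.span (std_words n w T d)" "\<forall>x\<in>T. i < x"
  shows "sk_mul n (sk_b n w i) y \<in> skel.span (std_words n w (insert i T) (Suc d))"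
  using assms(1) by (rule sk_mul_span) (use assms(2) in \<open>intro skel.span_base b_mul_std_word_prepend\<close>)

context
  fixes n :: nat and w :: "'k::field_char_0"
  assumes w_n: "w ^ n = 1" and n_pos: "0 < n"
begin

lemma sk_c_indep: "j < n \<Longrightarrow> k < n \<Longrightarrow> sk_c n w j k = sk_c n w j 0"
  using sk_c_eq_c_diag[OF w_n] n_pos by simp

lemma sk_c_central: "j < n \<Longrightarrow> f \<in> skA n \<Longrightarrow> sk_mul n (sk_c n w j 0) f = sk_mul n f (sk_c n w j 0)"
  using sk_c_eq_c_diag[OF w_n _ n_pos] c_diag_central by simp

lemma sk_c_eq_anticommutator:
  assumes "g < n" "i < n"
  shows "sk_c n w ((g + i) mod n) 0 = sk_mul n (sk_b n w g) (sk_b n w i) + sk_mul n (sk_b n w i) (sk_b n w g)"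
proof -
  have "((g + i) mod n + n - g) mod n = i"
    using assms by (cases "g + i < n") (simp_all add: le_mod_geq)
  then have "sk_c n w ((g + i) mod n) g
      = sk_mul n (sk_b n w g) (sk_b n w i) + sk_mul n (sk_b n w i) (sk_b n w g)"
    by (simp add: sk_c_def sk_add_eq_plus)
  moreover have "sk_c n w ((g + i) mod n) g = sk_c n w ((g + i) mod n) 0"
    using assms n_pos by (intro sk_c_indep) simp_all
  ultimately show ?thesis
    by simp
qed

lemma c_mul_c_word:
  assumes "j < n"
  shows "sk_mul n (sk_c n w j 0) (c_word n w jv) = c_word n w (jv(j := Suc (jv j)))"
proof -
  let ?F = "\<lambda>g. sk_pow n (sk_c n w g 0) (jv g)"
  have "sk_mul n (sk_c n w j 0) (c_word n w jv)
      = sk_prod n (map (?F(j := sk_mul n (sk_c n w j 0) (?F j))) [0..<n])"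
    unfolding c_word_def using assms
    by (intro sk_mul_central_prod skA_sk_c sk_c_central skA_pow[OF skA_deg_sk_c]) auto
  also have "?F(j := sk_mul n (sk_c n w j 0) (?F j)) = (\<lambda>g. sk_pow n (sk_c n w g 0) ((jv(j := Suc (jv j))) g))"
    by (simp add: fun_eq_iff sk_pow_Suc)
  finally show ?thesis
    unfolding c_word_def .
qed

lemma c_mul_std_word:
  assumes "j < n" "sorted_wrt (<) L" "set L \<subseteq> S" "\<forall>s\<ge>n. jv s = 0"
  shows "sk_mul n (sk_c n w j 0) (sk_mul n (b_word n w L) (c_word n w jv))
    \<in> std_words n w S (length L + 2 * Suc (\<Sum>s<n. jv s))"
proof -
  have "sk_mul n (sk_c n w j 0) (sk_mul n (b_word n w L) (c_word n w jv))
      = sk_mul n (sk_mul n (sk_c n w j 0) (b_word n w L)) (c_word n w jv)"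
    by (simp only: sk_mul_assoc skA_sk_c skA_b_word skA_c_word)
  also have "\<dots> = sk_mul n (sk_mul n (b_word n w L) (sk_c n w j 0)) (c_word n w jv)"
    by (simp only: sk_c_central[OF assms(1) skA_b_word])
  also have "\<dots> = sk_mul n (b_word n w L) (c_word n w (jv(j := Suc (jv j))))"
    by (simp only: sk_mul_assoc skA_sk_c skA_b_word skA_c_word c_mul_c_word[OF assms(1)])
  also have "\<dots> \<in> std_words n w S (length L + 2 * Suc (\<Sum>s<n. jv s))"
  proof -
    have "\<forall>s\<ge>n. (jv(j := Suc (jv j))) s = 0"
      using assms(1,4) by simp
    moreover have "(\<Sum>s<n. (jv(j := Suc (jv j))) s) = Suc (\<Sum>s<n. jv s)"
      using assms(1) by (intro sum_fun_upd_Suc) simp_all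
    ultimately show ?thesis
      using std_wordsI[OF assms(2,3)] by metis
  qed
  finally show ?thesis .
qed

lemma b_mul_std_word_in_span:
  assumes "sorted_wrt (<) L" "set L \<subseteq> {..<n}" "g < n" "\<forall>s\<ge>n. jv s = 0"
  shows "sk_mul n (sk_b n w g) (sk_mul n (b_word n w L) (c_word n w jv))
    \<in> skel.span (std_words n w (insert g (set L)) (Suc (length L + 2 * (\<Sum>s<n. jv s))))"
  using assms(1,2)
proof (induct L)
  case Nil
  have "sk_mul n (b_word n w []) (c_word n w jv) \<in> std_words n w {} (2 * (\<Sum>s<n. jv s))"
    using std_wordsI[of "[]" "{}" n jv w] assms(4) by simp
  then show ?case
    by (intro skel.span_base) (simp add: b_mul_std_word_prepend)
next
  case (Cons i L)
  let ?X = "sk_mul n (b_word n w L) (c_word n w jv)"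
  let ?S = "insert g (set (i # L))" and ?s = "\<Sum>s<n. jv s"
  have i: "i < n" "\<forall>x\<in>set L. i < x" "sorted_wrt (<) L" "set L \<subseteq> {..<n}"
    using Cons.prems by auto
  have X: "?X \<in> skA n"
    by (intro skA_mul skA_b_word skA_c_word)
  have word: "sk_mul n (sk_b n w g) (sk_mul n (b_word n w (i # L)) (c_word n w jv))
      = sk_mul n (sk_mul n (sk_b n w g) (sk_b n w i)) ?X"
    by (simp add: b_word_Cons sk_mul_assoc skA_b skA_b_word skA_c_word X)
  have cX: "sk_mul n (sk_c n w ((g + i) mod n) 0) ?X \<in> std_words n w ?S (Suc (length (i # L) + 2 * ?s))"
    using c_mul_std_word[of "(g + i) mod n" L ?S jv] i n_pos assms(4) by auto
  consider "g < i" | "g = i" | "i < g"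
    by linarith
  then show ?case
  proof cases
    case 1
    then have "\<forall>x\<in>set (i # L). g < x"
      using i by auto
    with std_wordsI[OF Cons.prems(1) order_refl assms(4)] show ?thesis
      by (intro skel.span_base b_mul_std_word_prepend)
  next
    case 2
    have sq: "sk_mul n (sk_b n w g) (sk_b n w i) = sk_scale (1 / 2) (sk_c n w ((g + i) mod n) 0)"
      using sk_c_eq_anticommutator[OF assms(3) i(1)] 2 by (simp add: fun_eq_iff)
    have "sk_mul n (sk_b n w g) (sk_mul n (b_word n w (i # L)) (c_word n w jv))
        = sk_scale (1 / 2) (sk_mul n (sk_c n w ((g + i) mod n) 0) ?X)"
      by (simp only: word sq sk_mul_scale_left)
    also have "\<dots> \<in> skel.span (std_words n w ?S (Suc (length (i # L) + 2 * ?s)))"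
      using cX by (intro skel.span_scale skel.span_base)
    finally show ?thesis .
  next
    case 3
    have "sk_mul n (sk_b n w g) (sk_b n w i)
        = sk_c n w ((g + i) mod n) 0 - sk_mul n (sk_b n w i) (sk_b n w g)"
      using sk_c_eq_anticommutator[OF assms(3) i(1)] by (simp add: eq_diff_eq)
    then have "sk_mul n (sk_b n w g) (sk_mul n (b_word n w (i # L)) (c_word n w jv))
        = sk_mul n (sk_c n w ((g + i) mod n) 0) ?X - sk_mul n (sk_b n w i) (sk_mul n (sk_b n w g) ?X)"
      by (simp only: word sk_mul_diff_left sk_mul_assoc skA_b X)
    also have "\<dots> \<in> skel.span (std_words n w ?S (Suc (length (i # L) + 2 * ?s)))"
    proof (rule skel.span_diff)
      show "sk_mul n (sk_c n w ((g + i) mod n) 0) ?X \<in> skel.span (std_words n w ?S (Suc (length (i # L) + 2 * ?s)))"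
        using cX by (rule skel.span_base)
      have "\<forall>x\<in>insert g (set L). i < x"
        using i 3 by auto
      from b_mul_span_std_words_prepend[OF Cons.hyps[OF i(3,4)] this]
      show "sk_mul n (sk_b n w i) (sk_mul n (sk_b n w g) ?X)
          \<in> skel.span (std_words n w ?S (Suc (length (i # L) + 2 * ?s)))"
        by (simp add: insert_commute)
    qed
    finally show ?thesis .
  qed
qed

lemma b_mul_span_std_words:
  assumes "y \<in> skel.span (std_words n w {..<n} d)" "g < n"
  shows "sk_mul n (sk_b n w g) y \<in> skel.span (std_words n w {..<n} (Suc d))"
  using assms(1)
proof (rule sk_mul_span)
  fix s assume "s \<in> std_words n w {..<n} d"
  then obtain L jv where s: "s = sk_mul n (b_word n w L) (c_word n w jv)"
    and L: "sorted_wrt (<) L" "set L \<subseteq> {..<n}" "\<forall>s\<ge>n. jv s = 0" "length L + 2 * (\<Sum>s<n. jv s) = d"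
    unfolding std_words_def by blast
  have "sk_mul n (sk_b n w g) s \<in> skel.span (std_words n w (insert g (set L)) (Suc d))"
    using b_mul_std_word_in_span[OF L(1,2) assms(2) L(3)] L(4) by (simp add: s)
  also have "\<dots> \<subseteq> skel.span (std_words n w {..<n} (Suc d))"
    using L(2) assms(2) by (intro skel.span_mono std_words_mono) auto
  finally show "sk_mul n (sk_b n w g) s \<in> skel.span (std_words n w {..<n} (Suc d))" .
qed

context
  assumes primitive: "\<forall>m. 0 < m \<and> m < n \<longrightarrow> w ^ m \<noteq> 1"
begin

lemma sum_roots_of_unity: "(\<Sum>g<n. w ^ (g * t)) = (if n dvd t then of_nat n else 0)"
proof (cases "n dvd t")
  case True
  then obtain k where "t = n * k"
    by (rule dvdE)
  then have "w ^ (g * t) = 1" for g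
    using w_n by (simp add: power_mult mult.left_commute[of g n])
  with True show ?thesis
    by simp
next
  case False
  have "w ^ t = w ^ (t mod n)"
    using w_n by (rule power_mod_eq_if_power_eq_1) simp
  moreover have "0 < t mod n" "t mod n < n"
    using False n_pos by (auto simp: dvd_eq_mod_eq_0)
  ultimately have "w ^ t \<noteq> 1"
    using primitive by auto
  moreover have "(w ^ t) ^ n = 1"
    using w_n by (metis mult.commute power_mult power_one)
  ultimately have "(\<Sum>g<n. (w ^ t) ^ g) = 0"
    by (simp add: geometric_sum)
  with False show ?thesis
    by (simp add: power_mult[symmetric] mult.commute)
qed

text \<open>Fourier inversion of the definition of \<open>b\<^sub>\<gamma>\<close>.\<close>

lemma mon_unit_exp_eq_sum_b:
  assumes "i < n"
  shows "sk_mon (unit_exp i) = (\<Sum>g<n. sk_scale (w ^ (g * (n - i))) (sk_b n w g))"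
proof
  fix a
  have "(\<Sum>g<n. sk_scale (w ^ (g * (n - i))) (sk_b n w g)) a
      = (\<Sum>g<n. \<Sum>l<n. w ^ (g * (n - i)) * (w ^ (l * g) / of_nat n * sk_mon (unit_exp l) a))"
    by (simp add: sk_b_eq_sum_mon sum_apply sum_distrib_left)
  also have "\<dots> = (\<Sum>l<n. \<Sum>g<n. w ^ (g * (n - i)) * (w ^ (l * g) / of_nat n * sk_mon (unit_exp l) a))"
    by (rule sum.swap)
  also have "\<dots> = (\<Sum>l<n. (\<Sum>g<n. w ^ (g * (n - i + l))) / of_nat n * sk_mon (unit_exp l) a)"
    by (intro sum.cong refl)
       (simp add: sum_distrib_left sum_distrib_right sum_divide_distrib power_add distrib_left mult_ac)
  also have "\<dots> = (\<Sum>l<n. if l = i then sk_mon (unit_exp i) a else 0)"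
  proof (intro sum.cong refl)
    fix l assume "l \<in> {..<n}"
    moreover have "n dvd (n - i + l) \<longleftrightarrow> l = i"
      using assms \<open>l \<in> {..<n}\<close> by (intro dvd_diff_add_iff) simp_all
    ultimately show "(\<Sum>g<n. w ^ (g * (n - i + l))) / of_nat n * sk_mon (unit_exp l) a
        = (if l = i then sk_mon (unit_exp i) a else 0)"
      using n_pos by (simp add: sum_roots_of_unity)
  qed
  also have "\<dots> = sk_mon (unit_exp i) a"
    using assms by simp
  finally show "sk_mon (unit_exp i) a = (\<Sum>g<n. sk_scale (w ^ (g * (n - i))) (sk_b n w g)) a" ..
qed

lemma mon_in_span_std_words:
  "exp_vec n a \<Longrightarrow> (\<Sum>i<n. a i) = r \<Longrightarrow> sk_mon a \<in> skel.span (std_words n w {..<n} r)"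
proof (induct r arbitrary: a)
  case 0
  then have "a = 0"
    by (auto simp: fun_eq_iff exp_vec_def not_less[symmetric])
  then show ?case
    by (simp only: sk_one_eq_mon[symmetric]) (rule skel.span_base[OF sk_one_in_std_words])
next
  case (Suc r)
  have "\<exists>i<n. 0 < a i"
    by (rule ccontr) (use Suc.prems(2) in simp)
  then obtain i where i: "i < n" "0 < a i"
    by blast
  define a' where "a' = (\<lambda>j. a j - unit_exp i j)"
  have a: "a = unit_exp i + a'"
    using i by (auto simp: a'_def unit_exp_def fun_eq_iff)
  have "(\<Sum>j<n. a j) = (\<Sum>j<n. unit_exp i j) + (\<Sum>j<n. a' j)"
    by (subst a) (simp add: sum.distrib)
  then have a': "exp_vec n a'" "(\<Sum>j<n. a' j) = r"
    using Suc.prems i(1) by (simp_all add: a'_def exp_vec_def sum_unit_exp)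
  let ?s = "sk_sign n (unit_exp i) a' :: 'k"
  have "sk_mul n (sk_mon (unit_exp i)) (sk_mon a') = sk_scale ?s (sk_mon a)"
    unfolding a by (rule sk_mul_mon[OF exp_vec_unit_exp[OF i(1)] a'(1)])
  then have "sk_mon a = sk_scale ?s (sk_mul n (sk_mon (unit_exp i)) (sk_mon a'))"
    by (simp add: fun_eq_iff mult.assoc[symmetric] sk_sign_square)
  also have "\<dots> = sk_scale ?s (\<Sum>g<n. sk_scale (w ^ (g * (n - i))) (sk_mul n (sk_b n w g) (sk_mon a')))"
    by (simp only: mon_unit_exp_eq_sum_b[OF i(1)] sk_mul_sum_left sk_mul_scale_left)
  also have "\<dots> \<in> skel.span (std_words n w {..<n} (Suc r))"
    by (intro skel.span_scale skel.span_sum b_mul_span_std_words[OF Suc.hyps[OF a']]) simp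
  finally show ?case .
qed

lemma skA_deg_subset_span_std_words: "(skA_deg n r :: 'k skel set) \<subseteq> skel.span (std_words n w {..<n} r)"
proof -
  have "sk_mon ` exps_deg n r \<subseteq> skel.span (std_words n w {..<n} r)"
    using mon_in_span_std_words by (auto simp: exps_deg_def)
  then show ?thesis
    using skA_deg_subset_span_mon skel.span_minimal[OF _ skel.subspace_span] by blast
qed

end

end

section \<open>Counting dimensions\<close>

lemma independent_sk_mon:
  assumes "finite A"
  shows "skel.independent (sk_mon ` A :: 'k::field skel set)"
proof (rule skel.independent_if_scalars_zero)
  show "finite (sk_mon ` A :: 'k skel set)"
    using assms by simp
next
  fix u :: "'k skel \<Rightarrow> 'k" and x :: "'k skel"
  assume sum0: "(\<Sum>x\<in>sk_mon ` A. sk_scale (u x) x) = 0" and "x \<in> sk_mon ` A"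
  then obtain b where b: "b \<in> A" "x = sk_mon b"
    by blast
  have "0 = (\<Sum>a\<in>A. sk_scale (u (sk_mon a)) (sk_mon a)) b"
    using sum0 by (simp add: sum.reindex inj_on_subset[OF inj_sk_mon])
  also have "\<dots> = u x"
    using assms b by (simp add: sum_apply sk_mon_def if_distrib[of "(*) _"] cong: if_cong)
  finally show "u x = 0" ..
qed

lemma dim_skA_deg: "skel.dim (skA_deg n r :: 'k::field skel set) = card (exps_deg n r)"
proof (rule skel.dim_unique)
  show "sk_mon ` exps_deg n r \<subseteq> (skA_deg n r :: 'k skel set)"
    using skA_deg_mon by (auto simp: exps_deg_def)
  show "skA_deg n r \<subseteq> skel.span (sk_mon ` exps_deg n r :: 'k skel set)"
    by (rule skA_deg_subset_span_mon)
  show "skel.independent (sk_mon ` exps_deg n r :: 'k skel set)"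
    by (rule independent_sk_mon[OF finite_exps_deg])
  show "card (sk_mon ` exps_deg n r :: 'k skel set) = card (exps_deg n r)"
    by (rule card_image[OF inj_on_subset[OF inj_sk_mon]]) simp
qed

lemma bij_betw_sk_idx_exps_deg: "bij_betw (\<lambda>(iv, jv) s. iv s + 2 * jv s) (sk_idx n r) (exps_deg n r)"
proof (rule bij_betw_byWitness[where f'="\<lambda>a. (\<lambda>s. a s mod 2, \<lambda>s. a s div 2)"])
  show "\<forall>p\<in>sk_idx n r. (\<lambda>a. (\<lambda>s. a s mod 2, \<lambda>s. a s div 2)) ((\<lambda>(iv, jv) s. iv s + 2 * jv s) p) = p"
  proof
    fix p assume p: "p \<in> sk_idx n r"
    obtain iv jv where p_eq: "p = (iv, jv)"
      by fastforce
    have iv: "iv s = 0 \<or> iv s = 1" for s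
      using p by (auto simp: p_eq sk_idx_def le_Suc_eq)
    have "(iv s + 2 * jv s) mod 2 = iv s" "(iv s + 2 * jv s) div 2 = jv s" for s
      using iv[of s] by auto
    then show "(\<lambda>a. (\<lambda>s. a s mod 2, \<lambda>s. a s div 2)) ((\<lambda>(iv, jv) s. iv s + 2 * jv s) p) = p"
      by (simp add: p_eq)
  qed
  show "\<forall>a\<in>exps_deg n r. (\<lambda>(iv, jv) s. iv s + 2 * jv s) ((\<lambda>a. (\<lambda>s. a s mod 2, \<lambda>s. a s div 2)) a) = a"
    by simp
  show "(\<lambda>(iv, jv) s. iv s + 2 * jv s) ` sk_idx n r \<subseteq> exps_deg n r"
    by (auto simp: sk_idx_def exps_deg_def exp_vec_def sum.distrib sum_distrib_left)
  show "(\<lambda>a. (\<lambda>s. a s mod 2, \<lambda>s. a s div 2)) ` exps_deg n r \<subseteq> sk_idx n r"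
  proof clarify
    fix a assume a: "a \<in> exps_deg n r"
    have "(\<Sum>s<n. a s mod 2) + 2 * (\<Sum>s<n. a s div 2) = (\<Sum>s<n. a s mod 2 + 2 * (a s div 2))"
      by (simp only: sum.distrib sum_distrib_left)
    with a show "(\<lambda>s. a s mod 2, \<lambda>s. a s div 2) \<in> sk_idx n r"
      by (auto simp: sk_idx_def exps_deg_def exp_vec_def)
  qed
qed

lemma sk_prod_pow_b_eq_b_word:
  assumes "\<forall>g. iv g \<le> (1::nat)"
  shows "sk_prod n (map (\<lambda>g. sk_pow n (sk_b n w g) (iv g)) xs) = b_word n w (filter (\<lambda>g. iv g = 1) xs)"
proof (induct xs)
  case Nil
  then show ?case
    by (simp add: b_word_def)
next
  case (Cons x xs)
  from assms have "iv x = 0 \<or> iv x = 1"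
    by (auto simp: le_Suc_eq)
  with Cons show ?case
    by (auto simp: sk_prod_Cons sk_pow_0 sk_pow_Suc b_word_Cons sk_mul_one_left sk_mul_one_right
        skA_b skA_b_word)
qed

lemma sk_bas_eq_std_word:
  assumes "\<forall>s. iv s \<le> 1"
  shows "sk_bas n w (iv, jv) = sk_mul n (b_word n w (filter (\<lambda>g. iv g = 1) [0..<n])) (c_word n w jv)"
proof -
  have "sk_bas n w (iv, jv) = sk_mul n (sk_prod n (map (\<lambda>g. sk_pow n (sk_b n w g) (iv g)) [0..<n]))
      (c_word n w jv)"
    unfolding sk_bas_def c_word_def fst_conv snd_conv
    by (rule sk_prod_append) (auto intro: skA_pow skA_deg_b skA_deg_sk_c)
  then show ?thesis
    by (simp only: sk_prod_pow_b_eq_b_word[OF assms])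
qed

lemma length_filter_eq_sum:
  assumes "\<forall>s. iv s \<le> (1::nat)"
  shows "length (filter (\<lambda>g. iv g = 1) [0..<n]) = (\<Sum>s<n. iv s)"
proof -
  have "length (filter (\<lambda>g. iv g = 1) xs) = (\<Sum>g\<leftarrow>xs. iv g)" for xs
    using assms by (induct xs) (auto simp: le_Suc_eq)
  then show ?thesis
    by (simp add: interv_sum_list_conv_sum_set_nat atLeast0LessThan)
qed

lemma std_words_eq_image_sk_bas: "std_words n w {..<n} r = sk_bas n w ` sk_idx n r"
proof
  show "sk_bas n w ` sk_idx n r \<subseteq> std_words n w {..<n} r"
  proof clarify
    fix iv jv assume p: "(iv, jv) \<in> sk_idx n r"
    then have iv: "\<forall>s. iv s \<le> 1"
      by (simp add: sk_idx_def)
    have "sorted_wrt (<) (filter (\<lambda>g. iv g = 1) [0..<n])"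
      by (rule sorted_wrt_filter) simp
    then have "sk_bas n w (iv, jv)
        \<in> std_words n w {..<n} (length (filter (\<lambda>g. iv g = 1) [0..<n]) + 2 * (\<Sum>s<n. jv s))"
      unfolding sk_bas_eq_std_word[OF iv] by (rule std_wordsI) (use p in \<open>auto simp: sk_idx_def\<close>)
    also have "length (filter (\<lambda>g. iv g = 1) [0..<n]) + 2 * (\<Sum>s<n. jv s) = r"
      using p length_filter_eq_sum[OF iv] by (simp add: sk_idx_def)
    finally show "sk_bas n w (iv, jv) \<in> std_words n w {..<n} r" .
  qed
  show "std_words n w {..<n} r \<subseteq> sk_bas n w ` sk_idx n r"
  proof
    fix x assume "x \<in> std_words n w {..<n} r"
    then obtain L jv where x: "x = sk_mul n (b_word n w L) (c_word n w jv)"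
      and L: "sorted_wrt (<) L" "set L \<subseteq> {..<n}" "\<forall>s\<ge>n. jv s = 0" "length L + 2 * (\<Sum>s<n. jv s) = r"
      unfolding std_words_def by blast
    define iv where "iv g = (if g \<in> set L then 1 else 0 :: nat)" for g
    have iv: "\<forall>s. iv s \<le> 1"
      by (simp add: iv_def)
    have "filter (\<lambda>g. iv g = 1) [0..<n] = filter (\<lambda>g. g \<in> set L) [0..<n]"
      by (simp add: iv_def)
    also have "\<dots> = L"
      using L(1,2) by (intro sorted_distinct_set_unique) (auto simp: strict_sorted_iff sorted_wrt_filter)
    finally have filter_L: "filter (\<lambda>g. iv g = 1) [0..<n] = L" .
    have "(\<Sum>s<n. iv s) = length L"
      using length_filter_eq_sum[OF iv, of n, unfolded filter_L] ..
    then have "(iv, jv) \<in> sk_idx n r"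
      using L by (auto simp: sk_idx_def iv_def)
    moreover have "x = sk_bas n w (iv, jv)"
      by (simp only: x sk_bas_eq_std_word[OF iv] filter_L)
    ultimately show "x \<in> sk_bas n w ` sk_idx n r"
      by blast
  qed
qed

lemma sk_is_basis_sk_bas:
  fixes w :: "'k::field_char_0"
  assumes "w ^ n = 1" "0 < n" "\<forall>m. 0 < m \<and> m < n \<longrightarrow> w ^ m \<noteq> 1"
  shows "sk_is_basis (sk_idx n r) (sk_bas n w) (skA_deg n r)"
proof (rule sk_is_basis_if_spanning_card_le_dim)
  show "finite (sk_idx n r)"
    using bij_betw_finite[OF bij_betw_sk_idx_exps_deg] finite_exps_deg by blast
  show "sk_bas n w ` sk_idx n r \<subseteq> skA_deg n r"
    using std_words_subset_skA_deg std_words_eq_image_sk_bas by blast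
  show "skA_deg n r \<subseteq> skel.span (sk_bas n w ` sk_idx n r)"
    using skA_deg_subset_span_std_words[OF assms] by (simp add: std_words_eq_image_sk_bas)
  show "card (sk_idx n r) \<le> skel.dim (skA_deg n r :: 'k skel set)"
    using bij_betw_same_card[OF bij_betw_sk_idx_exps_deg] by (simp add: dim_skA_deg)
qed

theorem proposition1p2:
  fixes \<omega> :: "'k::field_char_0" and n :: nat
  assumes alg_closed: "\<forall>p :: 'k poly. degree p > 0 \<longrightarrow> (\<exists>z. poly p z = 0)"
    and n2: "n \<ge> 2"
    and prim: "\<omega> ^ n = 1" "\<forall>m. 0 < m \<and> m < n \<longrightarrow> \<omega> ^ m \<noteq> 1"
  shows "(\<forall>j<n. \<forall>k<n. \<forall>k'<n. sk_c n \<omega> j k = sk_c n \<omega> j k')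
       \<and> (\<forall>j<n. \<forall>k<n. \<forall>f\<in>skA n. sk_mul n (sk_c n \<omega> j k) f = sk_mul n f (sk_c n \<omega> j k))
       \<and> (\<forall>r. sk_is_basis (sk_idx n r) (sk_bas n \<omega>) (skA_deg n r))"
proof (intro conjI allI impI ballI)
  show "sk_c n \<omega> j k = sk_c n \<omega> j k'" if "j < n" "k < n" "k' < n" for j k k'
    using sk_c_eq_c_diag[OF prim(1)] that by simp
  show "sk_mul n (sk_c n \<omega> j k) f = sk_mul n f (sk_c n \<omega> j k)" if "j < n" "k < n" "f \<in> skA n" for j k f
    using sk_c_eq_c_diag[OF prim(1)] c_diag_central that by simp
  show "sk_is_basis (sk_idx n r) (sk_bas n \<omega>) (skA_deg n r)" for r
    using n2 by (intro sk_is_basis_sk_bas prim) simp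
qed

end
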